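(* For $n\ge1$ and $0\le m\le n-1$ let $Z_n(m)$ be the number of $(\underline{i},\underline{k})\in\mathfrak{T}_n$ of weight $m$. Then: (1) $Z_n(m)=\sum_{j=n-m-1}^{n-1}Z_j(m-n+j+1)\,Z_{n-j}(n-j-1)$ for all $0\le m\le n-2$; (2) $Z_n(n-1)=C_{n-1}$; (3) $\sum_{m=0}^{n-1}2^{n-m}Z_n(m)=(n+1)C_n$, where $C_n=\frac1{n+1}\binom{2n}{n}$ is the $n$-th Catalan number.
   Context: $\mathfrak{T}_n$ is the set of pairs $(\underline{i},\underline{k})$ of $p$-tuples of non-negative integers $\underline{i}=(i_1,\dots,i_p)$, $\underline{k}=(k_1,\dots,k_p)$, $0\le p\le n-1$, with $1\le i_1<\dots<i_p\le n-1$ and $1\le i_1-k_1<\dots<i_p-k_p\le n-1$ (the empty pair, $p=0$, is included). The weight of $(\underline{i},\underline{k})$ is $|\bigcup_{j=1}^p\{i_j-k_j,i_j-k_j+1,\dots,i_j\}|$. It is known (Jones) that $|\mathfrak{T}_n|=\sum_{m=0}^{n-1}Z_n(m)=C_n$. *)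

theory Defs
  imports Main
begin

text \<open>An element of T_n is a pair (is, ks) of p-tuples (lists of length p) of
  non-negative integers with 0 <= p <= n-1, 1 <= i_1 < ... < i_p <= n-1 and
  1 <= i_1 - k_1 < ... < i_p - k_p <= n-1 (subtraction is that of integers;
  on nat, 1 <= i - k forces k < i, so no truncation occurs).\<close>
definition Tset :: "nat \<Rightarrow> (nat list \<times> nat list) set" where
  "Tset n = {(is, ks). length is = length ks \<and> length is \<le> n - 1
     \<and> sorted_wrt (<) is
     \<and> sorted_wrt (<) (map (\<lambda>j. is ! j - ks ! j) [0..<length is])
     \<and> (\<forall>j < length is. 1 \<le> is ! j \<and> is ! j \<le> n - 1
            \<and> 1 \<le> is ! j - ks ! j \<and> is ! j - ks ! j \<le> n - 1)}"

definition weight :: "nat list \<times> nat list \<Rightarrow> nat" where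
  "weight t = card (\<Union>j < length (fst t). {fst t ! j - snd t ! j .. fst t ! j})"

definition Z :: "nat \<Rightarrow> nat \<Rightarrow> nat" where
  "Z n m = card {t \<in> Tset n. weight t = m}"

definition catalan :: "nat \<Rightarrow> nat" where
  "catalan n = (2 * n choose n) div (n + 1)"

end

theory Submission
  imports Defs
begin

text \<open>Record an element of \<open>T_n\<close> as the list of its intervals \<open>[i_j - k_j, i_j]\<close>; both ends
  strictly increase along the list. Cutting a chain of intervals of weight \<open>m \<le> n - 2\<close> at the
  largest point of \<open>{1..n-1}\<close> it leaves uncovered splits it into an arbitrary chain on the left
  and a chain covering everything on the right, which is (1). A chain covering all of
  \<open>{1..n-1}\<close> is determined by its right ends together with its left ends moved one step back,
  so the chains of full weight in \<open>T_n\<close> correspond to all of \<open>T_(n-1)\<close>. These two recursions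
  determine \<open>Z\<close>, and the Catalan triangle (Pascal's recursion, with zeros on and above the
  diagonal) satisfies them too. Its closed form in binomial coefficients gives (2) and (3).\<close>

definition precedes :: "nat \<times> nat \<Rightarrow> nat \<times> nat \<Rightarrow> bool" where
  "precedes p q \<longleftrightarrow> fst p < fst q \<and> snd p < snd q"

text \<open>An interval is encoded as the pair (right end, left end).\<close>
definition interval_chains :: "nat \<Rightarrow> (nat \<times> nat) list set" where
  "interval_chains n = {ps. sorted_wrt precedes ps
                           \<and> (\<forall>p\<in>set ps. 1 \<le> snd p \<and> snd p \<le> fst p \<and> fst p \<le> n - 1)}"

definition covered :: "(nat \<times> nat) list \<Rightarrow> nat set" where
  "covered ps = (\<Union>p\<in>set ps. {snd p..fst p})"

definition chain_count :: "nat \<Rightarrow> nat \<Rightarrow> nat" where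
  "chain_count n m = card {ps \<in> interval_chains n. card (covered ps) = m}"

lemma interval_chainsD:
  assumes "ps \<in> interval_chains n"
  shows "sorted_wrt precedes ps"
    and "\<And>p. p \<in> set ps \<Longrightarrow> 1 \<le> snd p \<and> snd p \<le> fst p \<and> fst p \<le> n - 1"
  using assms unfolding interval_chains_def by auto

lemma interval_chainsI:
  assumes "sorted_wrt precedes ps"
    and "\<And>t. t < length ps \<Longrightarrow> 1 \<le> snd (ps!t) \<and> snd (ps!t) \<le> fst (ps!t) \<and> fst (ps!t) \<le> n - 1"
  shows "ps \<in> interval_chains n"
  using assms unfolding interval_chains_def by (force simp: in_set_conv_nth)

lemma chain_nth_bounds:
  assumes "ps \<in> interval_chains n" "t < length ps"
  shows "1 \<le> snd (ps!t)" "snd (ps!t) \<le> fst (ps!t)" "fst (ps!t) \<le> n - 1"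
  using interval_chainsD(2)[OF assms(1) nth_mem[OF assms(2)]] by auto

lemma chain_nth_less:
  assumes "ps \<in> interval_chains n" "a < b" "b < length ps"
  shows "fst (ps!a) < fst (ps!b)" "snd (ps!a) < snd (ps!b)"
  using interval_chainsD(1)[OF assms(1)] assms(2,3) unfolding sorted_wrt_iff_nth_less precedes_def by auto

lemma chain_nth_le:
  assumes "ps \<in> interval_chains n" "a \<le> b" "b < length ps"
  shows "fst (ps!a) \<le> fst (ps!b)" "snd (ps!a) \<le> snd (ps!b)"
  using chain_nth_less[OF assms(1) _ assms(3), of a] assms(2) by (cases "a = b"; force)+

lemma length_chain_le:
  assumes "ps \<in> interval_chains n"
  shows "length ps \<le> n - 1"
proof -
  have "sorted_wrt (<) (map fst ps)"
    using interval_chainsD(1)[OF assms] unfolding sorted_wrt_map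
    by (rule sorted_wrt_mono_rel[rotated]) (auto simp: precedes_def)
  hence "length ps = card (set (map fst ps))"
    using distinct_card[of "map fst ps"] by (simp add: strict_sorted_iff)
  also have "\<dots> \<le> card {1..n-1}"
    by (rule card_mono) (auto dest!: interval_chainsD(2)[OF assms])
  finally show ?thesis by simp
qed

lemma finite_interval_chains: "finite (interval_chains n)"
proof -
  have "interval_chains n \<subseteq> {xs. set xs \<subseteq> {0..n} \<times> {0..n} \<and> length xs \<le> n - 1}"
    using length_chain_le interval_chainsD(2) by fastforce
  thus ?thesis using finite_lists_length_le[of "{0..n} \<times> {0..n}"] finite_subset by blast
qed

lemma interval_chains_le_1: "n \<le> 1 \<Longrightarrow> interval_chains n = {[]}"
  using length_chain_le[of _ n] by (auto simp: interval_chains_def)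

lemma finite_covered: "finite (covered ps)"
  unfolding covered_def by auto

lemma covered_Nil: "covered [] = {}"
  unfolding covered_def by simp

lemma covered_append: "covered (xs @ ys) = covered xs \<union> covered ys"
  unfolding covered_def by auto

lemma mem_covered_iff_nth:
  "x \<in> covered ps \<longleftrightarrow> (\<exists>t<length ps. snd (ps!t) \<le> x \<and> x \<le> fst (ps!t))"
  unfolding covered_def by (fastforce simp: in_set_conv_nth)

lemma covered_subset:
  assumes "ps \<in> interval_chains n"
  shows "covered ps \<subseteq> {1..n-1}"
  using interval_chainsD(2)[OF assms] unfolding covered_def by fastforce

lemma card_covered_le:
  assumes "ps \<in> interval_chains n"
  shows "card (covered ps) \<le> n - 1"
  using card_mono[OF _ covered_subset[OF assms]] by simp

lemma card_covered_eq_iff: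
  assumes "ps \<in> interval_chains n"
  shows "card (covered ps) = n - 1 \<longleftrightarrow> covered ps = {1..n-1}"
  using card_subset_eq[OF _ covered_subset[OF assms]] by auto

lemma chain_count_le_1:
  assumes "n \<le> 1"
  shows "chain_count n m = (if m = 0 then 1 else 0)"
proof -
  have "{ps \<in> {[]}. card (covered ps) = m} = (if m = 0 then {[]} else {})"
    by (auto simp: covered_Nil)
  thus ?thesis unfolding chain_count_def interval_chains_le_1[OF assms] by simp
qed

lemma chain_count_eq_0:
  assumes "n \<ge> 1" "m \<ge> n"
  shows "chain_count n m = 0"
proof -
  have "card (covered ps) \<noteq> m" if "ps \<in> interval_chains n" for ps
    using card_covered_le[OF that] assms by linarith
  hence "{ps \<in> interval_chains n. card (covered ps) = m} = {}" by blast
  thus ?thesis unfolding chain_count_def by (simp only: card.empty)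
qed

lemma card_interval_chains_eq_sum: "card (interval_chains n) = (\<Sum>m = 0..n. chain_count n m)"
proof -
  have "interval_chains n = (\<Union>m\<in>{0..n}. {ps \<in> interval_chains n. card (covered ps) = m})"
    using card_covered_le by fastforce
  moreover have "card (\<Union>m\<in>{0..n}. {ps \<in> interval_chains n. card (covered ps) = m})
                 = (\<Sum>m = 0..n. chain_count n m)"
    unfolding chain_count_def
    by (rule card_UN_disjoint) (auto intro: finite_subset[OF _ finite_interval_chains])
  ultimately show ?thesis by simp
qed

definition chain_of :: "nat list \<times> nat list \<Rightarrow> (nat \<times> nat) list" where
  "chain_of t = map (\<lambda>j. (fst t ! j, fst t ! j - snd t ! j)) [0..<length (fst t)]"

definition pair_of_chain :: "(nat \<times> nat) list \<Rightarrow> nat list \<times> nat list" where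
  "pair_of_chain ps = (map fst ps, map (\<lambda>p. fst p - snd p) ps)"

lemma chain_of_in_chains:
  assumes "t \<in> Tset n"
  shows "chain_of t \<in> interval_chains n"
proof -
  obtain xs ks where t: "t = (xs, ks)" by (cases t)
  from assms[unfolded t Tset_def] have
    "sorted_wrt (<) xs" "sorted_wrt (<) (map (\<lambda>j. xs ! j - ks ! j) [0..<length xs])"
    and "\<forall>j < length xs. 1 \<le> xs ! j \<and> xs ! j \<le> n - 1
            \<and> 1 \<le> xs ! j - ks ! j \<and> xs ! j - ks ! j \<le> n - 1" by auto
  thus ?thesis
    unfolding interval_chains_def sorted_wrt_iff_nth_less chain_of_def t precedes_def by auto
qed

lemma pair_of_chain_in_Tset:
  assumes "ps \<in> interval_chains n"
  shows "pair_of_chain ps \<in> Tset n"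
proof -
  note bounds = chain_nth_bounds[OF assms]
  define xs where "xs = map fst ps"
  define ks where "ks = map (\<lambda>p. fst p - snd p) ps"
  have lefts: "map (\<lambda>j. xs ! j - ks ! j) [0..<length xs] = map snd ps"
    unfolding xs_def ks_def by (rule nth_equalityI) (auto dest: bounds)
  have "length xs = length ks" "length xs \<le> n - 1"
    unfolding xs_def ks_def using length_chain_le[OF assms] by auto
  moreover have "sorted_wrt (<) xs" "sorted_wrt (<) (map (\<lambda>j. xs ! j - ks ! j) [0..<length xs])"
    using interval_chainsD(1)[OF assms] unfolding lefts unfolding xs_def
    by (auto simp: sorted_wrt_iff_nth_less precedes_def)
  moreover have "\<forall>j < length xs. 1 \<le> xs ! j \<and> xs ! j \<le> n - 1
                   \<and> 1 \<le> xs ! j - ks ! j \<and> xs ! j - ks ! j \<le> n - 1"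
    using bounds unfolding xs_def ks_def by fastforce
  moreover have "pair_of_chain ps = (xs, ks)" unfolding pair_of_chain_def xs_def ks_def ..
  ultimately show ?thesis unfolding Tset_def by simp
qed

lemma pair_of_chain_of:
  assumes "t \<in> Tset n"
  shows "pair_of_chain (chain_of t) = t"
proof -
  obtain xs ks where t: "t = (xs, ks)" by (cases t)
  from assms[unfolded t Tset_def]
  have "length xs = length ks" "\<forall>j < length xs. 1 \<le> xs ! j - ks ! j" by auto
  thus ?thesis unfolding t pair_of_chain_def chain_of_def
    by (auto intro!: nth_equalityI)
qed

lemma chain_of_pair_of_chain:
  assumes "ps \<in> interval_chains n"
  shows "chain_of (pair_of_chain ps) = ps"
  unfolding chain_of_def pair_of_chain_def
  by (rule nth_equalityI) (auto dest: chain_nth_bounds[OF assms] simp: prod_eq_iff)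

lemma weight_eq_card_covered: "weight t = card (covered (chain_of t))"
proof -
  have "set (chain_of t) = (\<lambda>j. (fst t ! j, fst t ! j - snd t ! j)) ` {..<length (fst t)}"
    unfolding chain_of_def by auto
  thus ?thesis unfolding weight_def covered_def by simp
qed

lemma Z_eq_chain_count: "Z n m = chain_count n m"
proof -
  have "bij_betw chain_of {t \<in> Tset n. weight t = m} {ps \<in> interval_chains n. card (covered ps) = m}"
    by (rule bij_betw_byWitness[where f'=pair_of_chain])
       (auto simp: pair_of_chain_of chain_of_pair_of_chain chain_of_in_chains
                   pair_of_chain_in_Tset weight_eq_card_covered)
  thus ?thesis unfolding Z_def chain_count_def by (rule bij_betw_same_card)
qed

lemma full_chain_ends:
  assumes "ps \<in> interval_chains n" "covered ps = {1..n-1}" "n \<ge> 2"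
  shows "ps \<noteq> []" "snd (ps!0) = 1" "fst (ps!(length ps - 1)) = n - 1"
proof -
  show ne: "ps \<noteq> []" using assms(2,3) covered_Nil by auto
  have "1 \<in> covered ps" using assms(2,3) by simp
  then obtain t where t: "t < length ps" "snd (ps!t) \<le> 1"
    unfolding mem_covered_iff_nth by auto
  have "snd (ps!0) \<le> snd (ps!t)" using chain_nth_le[OF assms(1) _ t(1)] by simp
  thus "snd (ps!0) = 1" using t chain_nth_bounds(1)[OF assms(1), of 0] ne by simp
  have "n - 1 \<in> covered ps" using assms(2,3) by simp
  then obtain t where t: "t < length ps" "n - 1 \<le> fst (ps!t)"
    unfolding mem_covered_iff_nth by auto
  have "fst (ps!t) \<le> fst (ps!(length ps - 1))"
    using chain_nth_le[OF assms(1), of t "length ps - 1"] t by simp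
  thus "fst (ps!(length ps - 1)) = n - 1"
    using t chain_nth_bounds(3)[OF assms(1), of "length ps - 1"] ne by simp
qed

lemma full_chain_no_gap:
  assumes "ps \<in> interval_chains n" "covered ps = {1..n-1}" "t + 1 < length ps"
  shows "snd (ps!(t+1)) \<le> fst (ps!t) + 1"
proof -
  have "fst (ps!t) < fst (ps!(t+1))" "fst (ps!(t+1)) \<le> n - 1"
    using chain_nth_less[OF assms(1), of t "t+1"] chain_nth_bounds[OF assms(1,3)] assms(3)
    by simp_all
  hence "fst (ps!t) + 1 \<in> covered ps" using assms(2) by simp
  then obtain s where s: "s < length ps" "snd (ps!s) \<le> fst (ps!t) + 1" "fst (ps!t) + 1 \<le> fst (ps!s)"
    unfolding mem_covered_iff_nth by auto
  have "t < s"
  proof (rule ccontr)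
    assume "\<not> t < s"
    hence "fst (ps!s) \<le> fst (ps!t)" using chain_nth_le[OF assms(1), of s t] assms(3) by simp
    thus False using s by simp
  qed
  hence "snd (ps!(t+1)) \<le> snd (ps!s)" using chain_nth_le[OF assms(1), of "t+1" s] s by simp
  thus ?thesis using s by simp
qed

lemma covered_if_no_gaps:
  assumes "snd (ps!0) \<le> 1" "\<And>t. t + 1 < length ps \<Longrightarrow> snd (ps!(t+1)) \<le> fst (ps!t) + 1"
    and "t < length ps"
  shows "{1..fst (ps!t)} \<subseteq> covered ps"
  using assms(3)
proof (induction t)
  case 0
  thus ?case using assms(1) by (force simp: mem_covered_iff_nth)
next
  case (Suc t)
  have "snd (ps!Suc t) \<le> fst (ps!t) + 1" using assms(2) Suc.prems by simp
  hence "{1..fst (ps!Suc t)} \<subseteq> {1..fst (ps!t)} \<union> {snd (ps!Suc t)..fst (ps!Suc t)}" by auto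
  moreover have "{snd (ps!Suc t)..fst (ps!Suc t)} \<subseteq> covered ps"
    using Suc.prems by (force simp: mem_covered_iff_nth)
  moreover have "{1..fst (ps!t)} \<subseteq> covered ps" using Suc by simp
  ultimately show ?case by blast
qed

text \<open>A chain covering \<open>{1..n-1}\<close> starts at 1, ends at \<open>n - 1\<close> and has no gaps, so it is
  determined by its right ends \<open>r_t\<close> and its left ends \<open>l_(t+1)\<close>; the intervals
  \<open>[l_(t+1) - 1, r_t]\<close> form an arbitrary chain on \<open>{1..n-2}\<close>.\<close>
definition extend_chain :: "nat \<Rightarrow> (nat \<times> nat) list \<Rightarrow> (nat \<times> nat) list" where
  "extend_chain n ps = map (\<lambda>t. (if t < length ps then fst (ps!t) else n - 1,
                                 if t = 0 then 1 else Suc (snd (ps!(t-1))))) [0..<Suc (length ps)]"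

definition shrink_chain :: "(nat \<times> nat) list \<Rightarrow> (nat \<times> nat) list" where
  "shrink_chain ps = map (\<lambda>t. (fst (ps!t), snd (ps!(t+1)) - 1)) [0..<length ps - 1]"

lemma length_extend_chain: "length (extend_chain n ps) = Suc (length ps)"
  unfolding extend_chain_def by simp

lemma nth_extend_chain:
  "t < Suc (length ps) \<Longrightarrow> extend_chain n ps ! t =
     (if t < length ps then fst (ps!t) else n - 1, if t = 0 then 1 else Suc (snd (ps!(t-1))))"
  unfolding extend_chain_def by (simp del: upt_Suc)

lemma length_shrink_chain: "length (shrink_chain ps) = length ps - 1"
  unfolding shrink_chain_def by simp

lemma nth_shrink_chain:
  "t < length ps - 1 \<Longrightarrow> shrink_chain ps ! t = (fst (ps!t), snd (ps!(t+1)) - 1)"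
  unfolding shrink_chain_def by simp

lemma sorted_extend_chain:
  assumes "ps \<in> interval_chains (n - 1)" "n \<ge> 2"
  shows "sorted_wrt precedes (extend_chain n ps)"
  unfolding sorted_wrt_iff_nth_less length_extend_chain
proof (intro allI impI)
  fix a b assume ab: "a < b" "b < Suc (length ps)"
  have "fst (ps!a) < n - 1" if "a < length ps"
    using chain_nth_bounds(3)[OF assms(1) that] assms(2) by simp
  hence "(if a < length ps then fst (ps!a) else n - 1) < (if b < length ps then fst (ps!b) else n - 1)"
    using chain_nth_less(1)[OF assms(1) ab(1)] ab by auto
  moreover have "(if a = 0 then 1 else Suc (snd (ps!(a-1)))) < (if b = 0 then 1 else Suc (snd (ps!(b-1))))"
  proof (cases "a = 0")
    case True
    have "b - 1 < length ps" using ab by simp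
    hence "1 \<le> snd (ps!(b-1))" by (rule chain_nth_bounds(1)[OF assms(1)])
    thus ?thesis using True ab by simp
  next
    case False
    thus ?thesis using chain_nth_less(2)[OF assms(1), of "a-1" "b-1"] ab by simp
  qed
  ultimately show "precedes (extend_chain n ps ! a) (extend_chain n ps ! b)"
    using ab unfolding precedes_def by (simp add: nth_extend_chain)
qed

lemma extend_chain_in_chains:
  assumes "ps \<in> interval_chains (n - 1)" "n \<ge> 2"
  shows "extend_chain n ps \<in> interval_chains n"
proof (rule interval_chainsI[OF sorted_extend_chain[OF assms]])
  fix t assume "t < length (extend_chain n ps)"
  hence t: "t < Suc (length ps)" by (simp add: length_extend_chain)
  note bounds = chain_nth_bounds[OF assms(1)]
  show "1 \<le> snd (extend_chain n ps ! t) \<and> snd (extend_chain n ps ! t) \<le> fst (extend_chain n ps ! t)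
        \<and> fst (extend_chain n ps ! t) \<le> n - 1"
  proof (cases "t = 0")
    case True
    thus ?thesis using bounds[of 0] assms(2) by (auto simp: nth_extend_chain)
  next
    case False
    have t1: "t - 1 < length ps" using t False by simp
    have "t < length ps \<Longrightarrow> fst (ps!(t-1)) < fst (ps!t)"
      using chain_nth_less(1)[OF assms(1), of "t-1" t] False by simp
    thus ?thesis using bounds[OF t1] bounds[of t] t False assms(2)
      by (auto simp: nth_extend_chain)
  qed
qed

lemma covered_extend_chain:
  assumes "ps \<in> interval_chains (n - 1)" "n \<ge> 2"
  shows "covered (extend_chain n ps) = {1..n-1}"
proof
  show "covered (extend_chain n ps) \<subseteq> {1..n-1}"
    by (rule covered_subset[OF extend_chain_in_chains[OF assms]])
  have "{1..fst (extend_chain n ps ! length ps)} \<subseteq> covered (extend_chain n ps)"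
    by (rule covered_if_no_gaps)
       (auto simp: length_extend_chain nth_extend_chain chain_nth_bounds[OF assms(1)])
  thus "{1..n-1} \<subseteq> covered (extend_chain n ps)" by (simp add: nth_extend_chain)
qed

lemma shrink_chain_in_chains:
  assumes "ps \<in> interval_chains n" "covered ps = {1..n-1}" "n \<ge> 2"
  shows "shrink_chain ps \<in> interval_chains (n - 1)"
proof (rule interval_chainsI)
  note ends = full_chain_ends[OF assms]
  show "sorted_wrt precedes (shrink_chain ps)"
    unfolding sorted_wrt_iff_nth_less length_shrink_chain
  proof (intro allI impI)
    fix a b assume ab: "a < b" "b < length ps - 1"
    have "fst (ps!a) < fst (ps!b)" "snd (ps!(a+1)) < snd (ps!(b+1))" "1 \<le> snd (ps!(a+1))"
      using chain_nth_less[OF assms(1), of a b] chain_nth_less[OF assms(1), of "a+1" "b+1"]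
        chain_nth_bounds(1)[OF assms(1), of "a+1"] ab by simp_all
    thus "precedes (shrink_chain ps ! a) (shrink_chain ps ! b)"
      using ab unfolding precedes_def by (simp add: nth_shrink_chain)
  qed
  fix t assume "t < length (shrink_chain ps)"
  hence t: "t < length ps - 1" by (simp add: length_shrink_chain)
  have "snd (ps!0) < snd (ps!(t+1))" "fst (ps!t) < fst (ps!(length ps - 1))"
    using chain_nth_less[OF assms(1), of 0 "t+1"] chain_nth_less[OF assms(1), of t "length ps - 1"] t
    by simp_all
  moreover have "snd (ps!(t+1)) \<le> fst (ps!t) + 1" using full_chain_no_gap[OF assms(1,2)] t by simp
  ultimately show "1 \<le> snd (shrink_chain ps ! t) \<and> snd (shrink_chain ps ! t) \<le> fst (shrink_chain ps ! t)
        \<and> fst (shrink_chain ps ! t) \<le> n - 1 - 1"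
    using ends(2,3) t by (auto simp: nth_shrink_chain)
qed

lemma shrink_extend_chain: "shrink_chain (extend_chain n ps) = ps"
  by (rule nth_equalityI)
     (simp_all add: length_shrink_chain length_extend_chain nth_shrink_chain nth_extend_chain)

lemma extend_shrink_chain:
  assumes "ps \<in> interval_chains n" "covered ps = {1..n-1}" "n \<ge> 2"
  shows "extend_chain n (shrink_chain ps) = ps"
proof (rule nth_equalityI)
  note ends = full_chain_ends[OF assms]
  show "length (extend_chain n (shrink_chain ps)) = length ps"
    using ends(1) by (simp add: length_extend_chain length_shrink_chain)
  fix t assume "t < length (extend_chain n (shrink_chain ps))"
  hence t: "t < length ps" using ends(1) by (simp add: length_extend_chain length_shrink_chain)
  have "t = length ps - 1 \<or> t < length ps - 1" using t by linarith
  moreover have "t \<noteq> 0 \<Longrightarrow> 1 \<le> snd (ps!t)" using chain_nth_bounds(1)[OF assms(1) t] .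
  ultimately show "extend_chain n (shrink_chain ps) ! t = ps ! t"
    using t ends(2,3)
    by (cases "t = 0") (auto simp: prod_eq_iff nth_extend_chain nth_shrink_chain length_shrink_chain)
qed

lemma chain_count_full:
  assumes "n \<ge> 1"
  shows "chain_count n (n - 1) = card (interval_chains (n - 1))"
proof (cases "n = 1")
  case True
  thus ?thesis by (simp add: chain_count_le_1 interval_chains_le_1)
next
  case False
  hence n: "n \<ge> 2" using assms by simp
  have "{ps \<in> interval_chains n. card (covered ps) = n - 1}
        = {ps \<in> interval_chains n. covered ps = {1..n-1}}"
    using card_covered_eq_iff by blast
  moreover have "bij_betw shrink_chain {ps \<in> interval_chains n. covered ps = {1..n-1}}
                                       (interval_chains (n - 1))"
    by (rule bij_betw_byWitness[where f'="extend_chain n"])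
       (use n shrink_extend_chain extend_shrink_chain extend_chain_in_chains
            covered_extend_chain shrink_chain_in_chains in blast)+
  ultimately show ?thesis unfolding chain_count_def by (simp add: bij_betw_same_card)
qed

definition shift_interval :: "nat \<Rightarrow> nat \<times> nat \<Rightarrow> nat \<times> nat" where
  "shift_interval u p = (fst p + u, snd p + u)"

definition unshift_interval :: "nat \<Rightarrow> nat \<times> nat \<Rightarrow> nat \<times> nat" where
  "unshift_interval u p = (fst p - u, snd p - u)"

definition glue :: "nat \<Rightarrow> (nat \<times> nat) list \<Rightarrow> (nat \<times> nat) list \<Rightarrow> (nat \<times> nat) list" where
  "glue u l r = l @ map (shift_interval u) r"

definition left_part :: "nat \<Rightarrow> (nat \<times> nat) list \<Rightarrow> (nat \<times> nat) list" where
  "left_part u ps = takeWhile (\<lambda>p. fst p < u) ps"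

definition right_part :: "nat \<Rightarrow> (nat \<times> nat) list \<Rightarrow> (nat \<times> nat) list" where
  "right_part u ps = map (unshift_interval u) (dropWhile (\<lambda>p. fst p < u) ps)"

definition last_gap :: "nat \<Rightarrow> (nat \<times> nat) list \<Rightarrow> nat" where
  "last_gap n ps = Max ({1..n-1} - covered ps)"

lemma covered_map_shift_interval:
  "covered (map (shift_interval u) r) = (\<lambda>x. x + u) ` covered r"
  unfolding covered_def shift_interval_def by (simp add: image_UN)

lemma covered_glue: "covered (glue u l r) = covered l \<union> (\<lambda>x. x + u) ` covered r"
  unfolding glue_def by (simp add: covered_append covered_map_shift_interval)

lemma shifted_covered_subset:
  assumes "r \<in> interval_chains (n - u)" "u \<le> n - 1"
  shows "(\<lambda>x. x + u) ` covered r \<subseteq> {u+1..n-1}"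
  using covered_subset[OF assms(1)] assms(2) by fastforce

lemma glue_in_chains:
  assumes "1 \<le> u" "u \<le> n - 1" "l \<in> interval_chains u" "r \<in> interval_chains (n - u)"
  shows "glue u l r \<in> interval_chains n"
proof -
  have "sorted_wrt precedes (map (shift_interval u) r)"
    unfolding sorted_wrt_map using interval_chainsD(1)[OF assms(4)]
    by (rule sorted_wrt_mono_rel[rotated]) (auto simp: precedes_def shift_interval_def)
  moreover have "precedes p q" if p: "p \<in> set l" and q: "q \<in> set (map (shift_interval u) r)" for p q
  proof -
    obtain q' where "q' \<in> set r" "q = shift_interval u q'" using q by auto
    thus ?thesis using interval_chainsD(2)[OF assms(3) p] interval_chainsD(2)[OF assms(4)] assms(1)
      by (auto simp: precedes_def shift_interval_def)
  qed
  ultimately have "sorted_wrt precedes (glue u l r)"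
    using interval_chainsD(1)[OF assms(3)] unfolding glue_def by (simp add: sorted_wrt_append)
  moreover have "1 \<le> snd p \<and> snd p \<le> fst p \<and> fst p \<le> n - 1" if p: "p \<in> set (glue u l r)" for p
  proof -
    consider "p \<in> set l" | q where "q \<in> set r" "p = shift_interval u q"
      using p unfolding glue_def by auto
    thus ?thesis
    proof cases
      case 1
      thus ?thesis using interval_chainsD(2)[OF assms(3)] assms(2) by fastforce
    next
      case 2
      thus ?thesis using interval_chainsD(2)[OF assms(4) 2(1)] assms(1,2) by (auto simp: shift_interval_def)
    qed
  qed
  ultimately show ?thesis unfolding interval_chains_def by simp
qed

lemma card_covered_glue:
  assumes "1 \<le> u" "u \<le> n - 1" "l \<in> interval_chains u" "r \<in> interval_chains (n - u)"
  shows "card (covered (glue u l r)) = card (covered l) + card (covered r)"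
proof -
  have "covered l \<inter> (\<lambda>x. x + u) ` covered r = {}"
    using covered_subset[OF assms(3)] shifted_covered_subset[OF assms(4,2)] assms(1) by fastforce
  moreover have "card ((\<lambda>x. x + u) ` covered r) = card (covered r)"
    by (rule card_image) (auto simp: inj_on_def)
  ultimately show ?thesis
    unfolding covered_glue by (simp add: card_Un_disjoint finite_covered)
qed

lemma last_gap_glue:
  assumes "1 \<le> u" "u \<le> n - 1" "l \<in> interval_chains u" "covered r = {1..n-u-1}"
  shows "last_gap n (glue u l r) = u"
proof -
  have "(\<lambda>x. x + u) ` covered r = {1 + u..n - u - 1 + u}"
    unfolding assms(4) by (rule image_add_atLeastAtMost')
  also have "\<dots> = {u+1..n-1}" using assms(1,2) by (simp add: add.commute)
  finally have "covered (glue u l r) = covered l \<union> {u+1..n-1}" unfolding covered_glue by simp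
  moreover have "covered l \<subseteq> {1..u-1}" by (rule covered_subset[OF assms(3)])
  ultimately have "u \<in> {1..n-1} - covered (glue u l r)"
    and "\<And>x. x \<in> {1..n-1} - covered (glue u l r) \<Longrightarrow> x \<le> u"
    using assms(1,2) by auto
  thus ?thesis unfolding last_gap_def by (intro Max_eqI) auto
qed

lemma left_part_glue:
  assumes "1 \<le> u" "l \<in> interval_chains u"
  shows "left_part u (glue u l r) = l"
proof -
  have "takeWhile (\<lambda>p. fst p < u) (map (shift_interval u) r) = []"
    by (cases r) (auto simp: shift_interval_def)
  moreover have "\<forall>p\<in>set l. fst p < u" using interval_chainsD(2)[OF assms(2)] assms(1) by fastforce
  ultimately show ?thesis unfolding left_part_def glue_def by (simp add: takeWhile_append2)
qed

lemma right_part_glue: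
  assumes "1 \<le> u" "l \<in> interval_chains u"
  shows "right_part u (glue u l r) = r"
proof -
  have "dropWhile (\<lambda>p. fst p < u) (map (shift_interval u) r) = map (shift_interval u) r"
    by (rule dropWhile_id) (auto simp: shift_interval_def)
  moreover have "\<forall>p\<in>set l. fst p < u" using interval_chainsD(2)[OF assms(2)] assms(1) by fastforce
  ultimately show ?thesis unfolding right_part_def glue_def
    by (simp add: dropWhile_append2 map_idI shift_interval_def unshift_interval_def)
qed

lemma left_part_in_chains:
  assumes "ps \<in> interval_chains n"
  shows "left_part u ps \<in> interval_chains u"
  using sorted_wrt_takeWhile[OF interval_chainsD(1)[OF assms]] interval_chainsD(2)[OF assms]
  unfolding interval_chains_def left_part_def by (fastforce dest: set_takeWhileD)

lemma fst_ge_if_mem_dropWhile: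
  assumes "sorted_wrt precedes ps" "p \<in> set (dropWhile (\<lambda>p. fst p < u) ps)"
  shows "u \<le> fst p"
proof -
  obtain q qs where q: "dropWhile (\<lambda>p. fst p < u) ps = q # qs"
    using assms(2) by (cases "dropWhile (\<lambda>p. fst p < u) ps") auto
  have "u \<le> fst q" using hd_dropWhile[of "\<lambda>p. fst p < u" ps] q by simp
  moreover have "sorted_wrt precedes (q # qs)"
    using sorted_wrt_dropWhile[OF assms(1)] q by metis
  ultimately show ?thesis using assms(2) q by (auto simp: precedes_def)
qed

lemma snd_gt_if_mem_dropWhile:
  assumes "ps \<in> interval_chains n" "u \<notin> covered ps" "p \<in> set (dropWhile (\<lambda>p. fst p < u) ps)"
  shows "u < snd p"
  using fst_ge_if_mem_dropWhile[OF interval_chainsD(1)[OF assms(1)] assms(3)] assms(2,3)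
  unfolding covered_def by (force dest: set_dropWhileD)

lemma glue_left_right_part:
  assumes "ps \<in> interval_chains n" "u \<notin> covered ps"
  shows "glue u (left_part u ps) (right_part u ps) = ps"
proof -
  have "shift_interval u (unshift_interval u p) = p"
    if "p \<in> set (dropWhile (\<lambda>p. fst p < u) ps)" for p
    using snd_gt_if_mem_dropWhile[OF assms that] fst_ge_if_mem_dropWhile[OF interval_chainsD(1)[OF assms(1)] that]
    by (cases p) (simp add: shift_interval_def unshift_interval_def)
  hence "map (shift_interval u) (right_part u ps) = dropWhile (\<lambda>p. fst p < u) ps"
    unfolding right_part_def map_map by (intro map_idI) auto
  thus ?thesis unfolding glue_def left_part_def by simp
qed

lemma right_part_in_chains:
  assumes "ps \<in> interval_chains n" "u \<notin> covered ps"
  shows "right_part u ps \<in> interval_chains (n - u)"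
proof -
  note gt = snd_gt_if_mem_dropWhile[OF assms]
  note ge = fst_ge_if_mem_dropWhile[OF interval_chainsD(1)[OF assms(1)]]
  have "sorted_wrt precedes (right_part u ps)"
    unfolding right_part_def sorted_wrt_map using sorted_wrt_dropWhile[OF interval_chainsD(1)[OF assms(1)]]
  proof (rule sorted_wrt_mono_rel[rotated])
    fix p q assume "p \<in> set (dropWhile (\<lambda>p. fst p < u) ps)" "q \<in> set (dropWhile (\<lambda>p. fst p < u) ps)"
      and "precedes p q"
    thus "precedes (unshift_interval u p) (unshift_interval u q)"
      using gt[of p] gt[of q] ge[of p u] by (auto simp: precedes_def unshift_interval_def)
  qed
  moreover have "1 \<le> snd q \<and> snd q \<le> fst q \<and> fst q \<le> n - u - 1" if q: "q \<in> set (right_part u ps)" for q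
  proof -
    obtain p where p: "p \<in> set (dropWhile (\<lambda>p. fst p < u) ps)" "q = unshift_interval u p"
      using q unfolding right_part_def by auto
    have "p \<in> set ps" using p(1) by (auto dest: set_dropWhileD)
    thus ?thesis using gt[OF p(1)] interval_chainsD(2)[OF assms(1) \<open>p \<in> set ps\<close>] p(2)
      by (auto simp: unshift_interval_def)
  qed
  ultimately show ?thesis unfolding interval_chains_def by blast
qed

lemma covered_right_part:
  assumes "ps \<in> interval_chains n" "1 \<le> u" "u \<notin> covered ps"
    and "\<And>x. u < x \<Longrightarrow> x \<le> n - 1 \<Longrightarrow> x \<in> covered ps"
  shows "covered (right_part u ps) = {1..n-u-1}"
proof
  show "covered (right_part u ps) \<subseteq> {1..n-u-1}"
    using covered_subset[OF right_part_in_chains[OF assms(1,3)]] by simp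
  show "{1..n-u-1} \<subseteq> covered (right_part u ps)"
  proof
    fix x assume "x \<in> {1..n-u-1}"
    hence "x + u \<in> covered ps" using assms(2) by (intro assms(4)) auto
    moreover have "x + u \<notin> covered (left_part u ps)"
      using covered_subset[OF left_part_in_chains[OF assms(1), of u]] by force
    moreover have "covered ps = covered (left_part u ps) \<union> (\<lambda>x. x + u) ` covered (right_part u ps)"
      using covered_glue glue_left_right_part[OF assms(1,3)] by metis
    ultimately show "x \<in> covered (right_part u ps)" by auto
  qed
qed

lemma last_gap_props:
  assumes "ps \<in> interval_chains n" "card (covered ps) + 2 \<le> n"
  shows "1 \<le> last_gap n ps" "last_gap n ps \<le> n - 1" "last_gap n ps \<notin> covered ps"
    and "\<And>x. last_gap n ps < x \<Longrightarrow> x \<le> n - 1 \<Longrightarrow> x \<in> covered ps"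
proof -
  have "\<not> {1..n-1} \<subseteq> covered ps"
    using card_mono[OF finite_covered[of ps], of "{1..n-1}"] assms(2) by auto
  hence gap: "last_gap n ps \<in> {1..n-1} - covered ps"
    unfolding last_gap_def by (intro Max_in) auto
  thus "1 \<le> last_gap n ps" "last_gap n ps \<le> n - 1" "last_gap n ps \<notin> covered ps" by auto
  fix x assume x: "last_gap n ps < x" "x \<le> n - 1"
  show "x \<in> covered ps"
  proof (rule ccontr)
    assume "x \<notin> covered ps"
    hence "x \<in> {1..n-1} - covered ps" using x gap by auto
    hence "x \<le> last_gap n ps" unfolding last_gap_def by (intro Max_ge) simp_all
    thus False using x(1) by simp
  qed
qed

lemma cut_at_last_gap:
  assumes "ps \<in> interval_chains n" "card (covered ps) + 2 \<le> n" "u = last_gap n ps"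
  shows "1 \<le> u" "u \<le> n - 1"
    and "glue u (left_part u ps) (right_part u ps) = ps"
    and "left_part u ps \<in> interval_chains u" "right_part u ps \<in> interval_chains (n - u)"
    and "covered (right_part u ps) = {1..n-u-1}"
    and "card (covered ps) = card (covered (left_part u ps)) + (n - u - 1)"
proof -
  note gap = last_gap_props[OF assms(1,2), folded assms(3)]
  show "1 \<le> u" "u \<le> n - 1" using gap(1,2) by auto
  show glued: "glue u (left_part u ps) (right_part u ps) = ps"
    by (rule glue_left_right_part[OF assms(1) gap(3)])
  show left: "left_part u ps \<in> interval_chains u" by (rule left_part_in_chains[OF assms(1)])
  show right: "right_part u ps \<in> interval_chains (n - u)" by (rule right_part_in_chains[OF assms(1) gap(3)])
  show full: "covered (right_part u ps) = {1..n-u-1}"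
    by (rule covered_right_part[OF assms(1) gap(1,3,4)])
  show "card (covered ps) = card (covered (left_part u ps)) + (n - u - 1)"
    using card_covered_glue[OF gap(1,2) left right] full by (simp add: glued)
qed

definition split_at_last_gap ::
    "nat \<Rightarrow> (nat \<times> nat) list \<Rightarrow> nat \<times> (nat \<times> nat) list \<times> (nat \<times> nat) list" where
  "split_at_last_gap n ps = (last_gap n ps, left_part (last_gap n ps) ps, right_part (last_gap n ps) ps)"

lemma split_at_last_gap_glue:
  assumes "1 \<le> u" "u \<le> n - 1" "l \<in> interval_chains u" "covered r = {1..n-u-1}"
  shows "split_at_last_gap n (glue u l r) = (u, l, r)"
  unfolding split_at_last_gap_def
  using last_gap_glue[OF assms] left_part_glue[OF assms(1,3)] right_part_glue[OF assms(1,3)] by simp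

lemma bij_betw_glue:
  assumes "m + 2 \<le> n"
  shows "bij_betw (\<lambda>(u, l, r). glue u l r)
           (SIGMA u:{n - m - 1..n - 1}. {l \<in> interval_chains u. card (covered l) = m + u + 1 - n}
                                      \<times> {r \<in> interval_chains (n - u). covered r = {1..n-u-1}})
           {ps \<in> interval_chains n. card (covered ps) = m}"
    (is "bij_betw _ ?S ?T")
proof (rule bij_betw_byWitness[where f'="split_at_last_gap n"])
  have pieces: "n - m - 1 \<le> u" "1 \<le> u" "u \<le> n - 1" "l \<in> interval_chains u"
      "r \<in> interval_chains (n - u)" "covered r = {1..n-u-1}" "card (covered l) = m + u + 1 - n"
    if "(u, l, r) \<in> ?S" for u l r
    using that assms by auto
  show "\<forall>a\<in>?S. split_at_last_gap n ((\<lambda>(u, l, r). glue u l r) a) = a"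
  proof
    fix a assume "a \<in> ?S"
    then obtain u l r where a: "a = (u, l, r)" "(u, l, r) \<in> ?S" by (cases a) auto
    thus "split_at_last_gap n ((\<lambda>(u, l, r). glue u l r) a) = a"
      using split_at_last_gap_glue[OF pieces(2-4,6)[OF a(2)]] by simp
  qed
  show "(\<lambda>(u, l, r). glue u l r) ` ?S \<subseteq> ?T"
  proof
    fix ps assume "ps \<in> (\<lambda>(u, l, r). glue u l r) ` ?S"
    then obtain u l r where ps: "ps = glue u l r" "(u, l, r) \<in> ?S" by auto
    note p = pieces[OF ps(2)]
    have "card (covered (glue u l r)) = (m + u + 1 - n) + (n - u - 1)"
      using card_covered_glue[OF p(2-5)] p(6,7) by simp
    also have "\<dots> = m" using p(1,3) assms by linarith
    finally have "card (covered (glue u l r)) = m" .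
    thus "ps \<in> ?T" using glue_in_chains[OF p(2-5)] ps(1) by simp
  qed
  show "\<forall>ps\<in>?T. (\<lambda>(u, l, r). glue u l r) (split_at_last_gap n ps) = ps"
    using cut_at_last_gap(3)[OF _ _ refl] assms by (auto simp: split_at_last_gap_def)
  show "split_at_last_gap n ` ?T \<subseteq> ?S"
  proof
    fix x assume "x \<in> split_at_last_gap n ` ?T"
    then obtain ps where ps: "x = split_at_last_gap n ps" "ps \<in> interval_chains n" "card (covered ps) = m"
      by auto
    note cut = cut_at_last_gap[OF ps(2) _ refl, unfolded ps(3), OF assms]
    show "x \<in> ?S"
      using cut unfolding ps(1) split_at_last_gap_def by auto
  qed
qed

lemma chain_count_decomposition:
  assumes "m + 2 \<le> n"
  shows "chain_count n m
           = (\<Sum>j = n - m - 1 .. n - 1. chain_count j (m + j + 1 - n) * chain_count (n - j) (n - j - 1))"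
proof -
  have "{r \<in> interval_chains (n - j). card (covered r) = n - j - 1}
        = {r \<in> interval_chains (n - j). covered r = {1..n-j-1}}" for j
    using card_covered_eq_iff[of _ "n - j"] by auto
  hence "(\<Sum>j = n - m - 1 .. n - 1. chain_count j (m + j + 1 - n) * chain_count (n - j) (n - j - 1))
         = card (SIGMA u:{n - m - 1..n - 1}. {l \<in> interval_chains u. card (covered l) = m + u + 1 - n}
                                      \<times> {r \<in> interval_chains (n - u). covered r = {1..n-u-1}})"
    unfolding chain_count_def
    by (simp add: card_SigmaI card_cartesian_product finite_interval_chains)
  also have "\<dots> = chain_count n m"
    unfolding chain_count_def by (rule bij_betw_same_card[OF bij_betw_glue[OF assms]])
  finally show ?thesis by simp
qed

fun catalan_triangle :: "nat \<Rightarrow> nat \<Rightarrow> nat" where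
  "catalan_triangle 0 m = (if m = 0 then 1 else 0)"
| "catalan_triangle (Suc n) 0 = 1"
| "catalan_triangle (Suc n) (Suc m) =
     (if n \<le> m then 0 else catalan_triangle n (Suc m) + catalan_triangle (Suc n) m)"

lemma catalan_triangle_eq_0: "1 \<le> n \<Longrightarrow> n \<le> m \<Longrightarrow> catalan_triangle n m = 0"
  by (cases n; cases m) auto

lemma catalan_triangle_first_column: "catalan_triangle n 0 = 1"
  by (cases n) auto

lemma catalan_triangle_pascal:
  "2 \<le> n \<Longrightarrow> 1 \<le> m \<Longrightarrow> m \<le> n - 1
   \<Longrightarrow> catalan_triangle n m = catalan_triangle (n - 1) m + catalan_triangle n (m - 1)"
  by (cases n; cases m) auto

lemma catalan_triangle_Suc_eq_sum:
  "k \<le> n \<Longrightarrow> catalan_triangle (Suc n) k = (\<Sum>m = 0..k. catalan_triangle n m)"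
  by (induction k) (simp_all add: catalan_triangle_first_column)

text \<open>The right-hand side of (1) for the triangle, reindexed by \<open>d = n - 1 - j\<close>. It obeys
  the same Pascal recursion as the triangle itself, which is how (1) is verified for it.\<close>
definition triangle_convolution :: "nat \<Rightarrow> nat \<Rightarrow> nat" where
  "triangle_convolution n m =
     (\<Sum>d = 0..m. catalan_triangle (n - 1 - d) (m - d) * catalan_triangle (d + 1) d)"

lemma triangle_convolution_diagonal:
  assumes "n \<ge> 1"
  shows "triangle_convolution n (n - 1) = catalan_triangle n (n - 1)"
proof -
  obtain k where k: "n = Suc k" using assms by (cases n) auto
  have "triangle_convolution n (n - 1)
        = (\<Sum>d = 0..k. catalan_triangle (k - d) (k - d) * catalan_triangle (d + 1) d)"
    unfolding triangle_convolution_def k by simp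
  also have "\<dots> = (\<Sum>d \<in> {k}. catalan_triangle (k - d) (k - d) * catalan_triangle (d + 1) d)"
    by (rule sum.mono_neutral_right) (auto simp: catalan_triangle_eq_0)
  finally show ?thesis using k by simp
qed

lemma triangle_convolution_pascal:
  assumes "1 \<le> m" "m + 2 \<le> n"
  shows "triangle_convolution n m = triangle_convolution (n - 1) m + triangle_convolution n (m - 1)"
proof -
  obtain k where k: "m = Suc k" using assms by (cases m) auto
  let ?T = catalan_triangle
  have "?T (n - 1 - d) (m - d) = ?T (n - 2 - d) (m - d) + ?T (n - 1 - d) (k - d)" if "d \<le> k" for d
    using catalan_triangle_pascal[of "n - 1 - d" "m - d"] that assms k
    by (simp add: numeral_2_eq_2)
  hence "(\<Sum>d = 0..k. ?T (n - 1 - d) (m - d) * ?T (d + 1) d)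
         = (\<Sum>d = 0..k. ?T (n - 2 - d) (m - d) * ?T (d + 1) d)
           + (\<Sum>d = 0..k. ?T (n - 1 - d) (k - d) * ?T (d + 1) d)"
    by (simp add: sum.distrib[symmetric] distrib_right)
  moreover have "triangle_convolution n m
                 = (\<Sum>d = 0..k. ?T (n - 1 - d) (m - d) * ?T (d + 1) d) + ?T (m + 1) m"
    unfolding triangle_convolution_def k by (simp add: catalan_triangle_first_column)
  moreover have "triangle_convolution (n - 1) m
                 = (\<Sum>d = 0..k. ?T (n - 2 - d) (m - d) * ?T (d + 1) d) + ?T (m + 1) m"
    unfolding triangle_convolution_def k by (simp add: numeral_2_eq_2 catalan_triangle_first_column)
  moreover have "triangle_convolution n (m - 1) = (\<Sum>d = 0..k. ?T (n - 1 - d) (k - d) * ?T (d + 1) d)"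
    unfolding triangle_convolution_def k by simp
  ultimately show ?thesis by simp
qed

lemma catalan_triangle_eq_convolution:
  "n \<ge> 1 \<Longrightarrow> m \<le> n - 1 \<Longrightarrow> catalan_triangle n m = triangle_convolution n m"
proof (induction "n + m" arbitrary: n m rule: less_induct)
  case less
  consider "m = 0" | "m = n - 1" | "1 \<le> m" "m + 2 \<le> n" using less.prems by linarith
  thus ?case
  proof cases
    case 1
    thus ?thesis by (simp add: triangle_convolution_def catalan_triangle_first_column)
  next
    case 2
    thus ?thesis using triangle_convolution_diagonal[OF less.prems(1)] by simp
  next
    case 3
    have "catalan_triangle n m = catalan_triangle (n - 1) m + catalan_triangle n (m - 1)"
      using catalan_triangle_pascal[of n m] 3 by simp
    also have "\<dots> = triangle_convolution (n - 1) m + triangle_convolution n (m - 1)"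
      using less.hyps[of "n - 1" m] less.hyps[of n "m - 1"] 3 by simp
    finally show ?thesis using triangle_convolution_pascal[OF 3] by simp
  qed
qed

lemma catalan_triangle_decomposition:
  assumes "m + 2 \<le> n"
  shows "catalan_triangle n m = (\<Sum>j = n - m - 1 .. n - 1.
           catalan_triangle j (m + j + 1 - n) * catalan_triangle (n - j) (n - j - 1))"
proof -
  have "catalan_triangle n m = triangle_convolution n m"
    using catalan_triangle_eq_convolution[of n m] assms by simp
  also have "\<dots> = (\<Sum>j = n - m - 1 .. n - 1.
                    catalan_triangle j (m + j + 1 - n) * catalan_triangle (n - j) (n - j - 1))"
    unfolding triangle_convolution_def
    by (rule sum.reindex_bij_witness[where i="\<lambda>j. n - 1 - j" and j="\<lambda>d. n - 1 - d"])
       (use assms in \<open>auto simp: Suc_diff_le\<close>)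
  finally show ?thesis .
qed

lemma chain_count_eq_catalan_triangle: "chain_count n m = catalan_triangle n m"
proof (induction n arbitrary: m rule: less_induct)
  case (less n)
  consider "n = 0" | "n \<ge> 1" "m \<ge> n" | "n \<ge> 1" "m = n - 1" | "m + 2 \<le> n" by linarith
  thus ?case
  proof cases
    case 1
    thus ?thesis by (simp add: chain_count_le_1)
  next
    case 2
    thus ?thesis by (simp add: chain_count_eq_0 catalan_triangle_eq_0)
  next
    case 3
    then obtain k where k: "n = Suc k" by (cases n) auto
    have "chain_count n m = (\<Sum>j = 0..k. chain_count k j)"
      using chain_count_full[of n] card_interval_chains_eq_sum[of k] 3 k by simp
    also have "\<dots> = catalan_triangle n m"
      using less.IH[of k] catalan_triangle_Suc_eq_sum[of k k] 3 k by simp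
    finally show ?thesis .
  next
    case 4
    thus ?thesis
      using chain_count_decomposition[OF 4] catalan_triangle_decomposition[OF 4] less.IH
      by (auto intro!: sum.cong)
  qed
qed

lemma catalan_triangle_binomial:
  "1 \<le> m \<Longrightarrow> m \<le> Suc a \<Longrightarrow> catalan_triangle (Suc a) m + (a + m choose (m - 1)) = a + m choose m"
proof (induction "a + m" arbitrary: a m rule: less_induct)
  case less
  consider "m = Suc a" | "m = 1" "1 < Suc a" | "2 \<le> m" "m < Suc a" using less.prems by linarith
  thus ?case
  proof cases
    case 1
    thus ?thesis using binomial_symmetric[of m "a + m"] by (simp add: catalan_triangle_eq_0)
  next
    case 2
    then obtain b where b: "a = Suc b" by (cases a) auto
    thus ?thesis using less.hyps[of b 1] 2 by (simp add: catalan_triangle_first_column)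
  next
    case 3
    obtain b where b: "a = Suc b" using 3 by (cases a) auto
    obtain k where k: "m = Suc (Suc k)" using 3(1) by (metis add_2_eq_Suc le_Suc_ex)
    have "catalan_triangle (Suc a) m = catalan_triangle a m + catalan_triangle (Suc a) (m - 1)"
      using catalan_triangle_pascal[of "Suc a" m] 3 by simp
    moreover have "catalan_triangle (Suc b) m + (b + m choose (m - 1)) = b + m choose m"
      using less.hyps[of b m] 3 b by simp
    moreover have "catalan_triangle (Suc a) (m - 1) + (a + (m - 1) choose (m - 1 - 1))
                   = a + (m - 1) choose (m - 1)"
      using less.hyps[of a "m - 1"] 3 by simp
    ultimately show ?thesis unfolding b k by (simp del: catalan_triangle.simps)
  qed
qed

lemma central_binomial_absorption:
  assumes "k \<ge> 1"
  shows "k * (2 * k choose k) = (k + 1) * (2 * k choose (k - 1))"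
proof -
  obtain j where j: "k = Suc j" using assms by (cases k) auto
  have "Suc j * (2 * k choose Suc j) = 2 * k * (2 * k - 1 choose j)" by (rule binomial_absorption)
  moreover have "(2 * k - j) * (2 * k choose j) = 2 * k * (2 * k - 1 choose j)"
    by (rule binomial_absorb_comp)
  ultimately show ?thesis using j by simp
qed

lemma catalan_central_binomial:
  assumes "k \<ge> 1"
  shows "(k + 1) * catalan k = 2 * k choose k"
    and "catalan k + (2 * k choose (k - 1)) = 2 * k choose k"
proof -
  define X where "X = 2 * k choose k"
  define Y where "Y = 2 * k choose (k - 1)"
  have kXY: "k * X = (k + 1) * Y"
    unfolding X_def Y_def by (rule central_binomial_absorption[OF assms])
  hence "(k + 1) * Y \<le> (k + 1) * X" by simp
  hence "Y \<le> X" using mult_le_cancel1[of "k + 1" Y X] by simp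
  have XY: "(k + 1) * (X - Y) = X"
    using kXY by (simp add: diff_mult_distrib2)
  have "catalan k = X div (k + 1)" unfolding catalan_def X_def by simp
  also have "\<dots> = ((k + 1) * (X - Y)) div (k + 1)" unfolding XY ..
  also have "\<dots> = X - Y" by (rule nonzero_mult_div_cancel_left) simp
  finally have "catalan k = X - Y" .
  thus "(k + 1) * catalan k = 2 * k choose k" "catalan k + (2 * k choose (k - 1)) = 2 * k choose k"
    using XY \<open>Y \<le> X\<close> unfolding X_def Y_def by simp_all
qed

lemma catalan_triangle_diagonal: "catalan_triangle (Suc k) k = catalan k"
proof (cases "k = 0")
  case True
  thus ?thesis by (simp add: catalan_def)
next
  case False
  thus ?thesis
    using catalan_triangle_binomial[of k k] catalan_central_binomial(2)[of k] by (simp add: mult_2)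
qed

lemma weighted_partial_sum_Suc:
  "k \<le> n \<Longrightarrow> (\<Sum>m = 0..k. 2 ^ (k - m) * catalan_triangle (Suc n) m) + catalan_triangle (Suc n) k
                  = 2 * (\<Sum>m = 0..k. 2 ^ (k - m) * catalan_triangle n m)"
proof (induction k)
  case 0
  thus ?case by (simp add: catalan_triangle_first_column)
next
  case (Suc k)
  have "(\<Sum>m = 0..Suc k. 2 ^ (Suc k - m) * f m) = 2 * (\<Sum>m = 0..k. 2 ^ (k - m) * f m) + f (Suc k)"
    for f :: "nat \<Rightarrow> nat"
    by (simp add: sum_distrib_left Suc_diff_le mult.assoc)
  moreover have "catalan_triangle (Suc n) (Suc k) = catalan_triangle (Suc n) k + catalan_triangle n (Suc k)"
    using catalan_triangle_Suc_eq_sum[of "Suc k" n] catalan_triangle_Suc_eq_sum[of k n] Suc.prems by simp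
  ultimately show ?case using Suc by simp
qed

lemma weighted_row_sum:
  "n \<ge> 1 \<Longrightarrow> (\<Sum>m = 0..n - 1. 2 ^ (n - m) * catalan_triangle n m) = 2 * n choose n"
proof (induction n rule: nat_induct_at_least)
  case base
  thus ?case by simp
next
  case (Suc n)
  define X where "X = 2 * n choose n"
  define Y where "Y = 2 * n choose (n - 1)"
  have "(\<Sum>m = 0..n. 2 ^ (n - m) * catalan_triangle n m)
        = (\<Sum>m = 0..n - 1. 2 ^ (n - m) * catalan_triangle n m)"
    using Suc.hyps catalan_triangle_eq_0[of n n]
    by (cases n) (simp_all add: atLeastAtMostSuc_conv)
  hence "(\<Sum>m = 0..n. 2 ^ (n - m) * catalan_triangle n m) = X" using Suc.IH unfolding X_def by simp
  moreover have "(\<Sum>m = 0..n. 2 ^ (Suc n - m) * catalan_triangle (Suc n) m)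
                 = 2 * (\<Sum>m = 0..n. 2 ^ (n - m) * catalan_triangle (Suc n) m)"
    by (simp add: sum_distrib_left Suc_diff_le mult.assoc)
  ultimately have "(\<Sum>m = 0..n. 2 ^ (Suc n - m) * catalan_triangle (Suc n) m)
                   + 2 * catalan_triangle (Suc n) n = 4 * X"
    using weighted_partial_sum_Suc[of n n] by simp
  moreover have "catalan_triangle (Suc n) n + Y = X"
    using catalan_triangle_binomial[of n n] Suc.hyps unfolding X_def Y_def by (simp add: mult_2)
  moreover have "2 * Suc n choose Suc n = 2 * (X + Y)"
  proof -
    have "2 * Suc n choose Suc n = (Suc (2 * n) choose n) + (Suc (2 * n) choose Suc n)" by simp
    also have "Suc (2 * n) choose Suc n = Suc (2 * n) choose n"
      using binomial_symmetric[of "Suc n" "Suc (2 * n)"] by simp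
    also have "Suc (2 * n) choose n = X + Y"
      using Suc.hyps unfolding X_def Y_def by (cases n) simp_all
    finally show ?thesis by simp
  qed
  ultimately show ?case by simp
qed

theorem mainTheorem18:
  fixes n :: nat
  assumes "n \<ge> 1"
  shows "(\<forall>m. m + 2 \<le> n \<longrightarrow>
            Z n m = (\<Sum>j = n - m - 1 .. n - 1. Z j (m + j + 1 - n) * Z (n - j) (n - j - 1)))
       \<and> Z n (n - 1) = catalan (n - 1)
       \<and> (\<Sum>m = 0 .. n - 1. 2 ^ (n - m) * Z n m) = (n + 1) * catalan n"
proof (intro conjI allI impI)
  fix m assume "m + 2 \<le> n"
  thus "Z n m = (\<Sum>j = n - m - 1 .. n - 1. Z j (m + j + 1 - n) * Z (n - j) (n - j - 1))"
    unfolding Z_eq_chain_count by (rule chain_count_decomposition)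
next
  show "Z n (n - 1) = catalan (n - 1)"
    using catalan_triangle_diagonal[of "n - 1"] assms
    by (simp add: Z_eq_chain_count chain_count_eq_catalan_triangle)
next
  show "(\<Sum>m = 0 .. n - 1. 2 ^ (n - m) * Z n m) = (n + 1) * catalan n"
    using weighted_row_sum[OF assms] catalan_central_binomial(1)[OF assms]
    by (simp add: Z_eq_chain_count chain_count_eq_catalan_triangle)
qed

end
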